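(* Let $\Lambda$ be a rank-2 Bratteli diagram. (1) Suppose a path $\alpha\in\Lambda$ has two factorisations $\alpha=\mu g\nu$ and $\alpha=\beta h\gamma$ in which $g,h\in\Lambda^{e_1}$ are blue edges and $d(\mu)$ and $d(\beta)$ have the same first coordinate. Then $o(g)=o(h)$. (2) For every blue path $\beta=\beta_1\beta_2\cdots\beta_n$ with blue edges $\beta_1,\dots,\beta_n$, $o(\beta)=\operatorname{lcm}(o(\beta_1),\dots,o(\beta_n))$.
   Context: A $2$-graph is a countable category $\Lambda$ with a functor $d:\Lambda\to\mathbb N^2$ satisfying unique factorisation (if $d(\lambda)=m+n$ there are unique $\mu,\nu$ with $d(\mu)=m,d(\nu)=n,\lambda=\mu\nu$). Vertices = degree-$0$ paths; $r,s$ range/source; $\Lambda^n=d^{-1}(n)$; $e_1=(1,0),e_2=(0,1)$; $vE=E\cap r^{-1}(v)$, $Ev=E\cap s^{-1}(v)$. Row-finite: each $v\Lambda^n$ finite. Blue paths: degree in $\mathbb N e_1$; red paths: degree in $\mathbb Ne_2$. $\lambda(m,n)$ is the unique path with $\lambda=\lambda'\lambda(m,n)\lambda''$, $d(\lambda')=m$, $d(\lambda(m,n))=n-m$; $\lambda(n)=\lambda(n,n)$. A cycle: $d(\lambda)\ne0$, $r(\lambda)=s(\lambda)$, $\lambda(n)\ne s(\lambda)$ for $0<n<d(\lambda)$; isolated: no $n\le d(\lambda)$ with $r(\lambda)\Lambda^n\setminus\{\lambda(0,n)\}\neq\emptyset$ and no $n\le d(\lambda)$ with $\Lambda^ns(\lambda)\setminus\{\lambda(d(\lambda)-n,d(\lambda))\}\neq\emptyset$.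 A rank-2 Bratteli diagram of depth $N\in\mathbb N\cup\{\infty\}$ is a row-finite 2-graph with $\Lambda^0=\bigsqcup_{0\le n\le N}V_n$ (all $n\in\mathbb N$ if $N=\infty$), each $V_n$ nonempty finite, such that: every blue edge $e$ has $r(e)\in V_n,s(e)\in V_{n+1}$ for some $n$; every vertex $v$ with $\Lambda^{e_1}v=\emptyset$ lies in $V_0$ and every vertex $v$ with $v\Lambda^{e_1}=\emptyset$ lies in $V_N$ (none if $N=\infty$); every vertex lies on an isolated cycle of red edges and every red edge has range and source in the same $V_n$. For a blue path $\alpha$, let $f$ be the unique red edge with $s(f)=r(\alpha)$ and $\mathcal F(\alpha)$ the unique blue path with $f\alpha=\mathcal F(\alpha)f'$ for some red edge $f'$; $o(\alpha)=\min\{k>0:\mathcal F^k(\alpha)=\alpha\}$. *)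

theory Defs
  imports Main "HOL-Library.Product_Plus" "HOL-Library.Product_Order"
    "HOL-Library.Countable_Set" "HOL-Library.Extended_Nat"
begin

text \<open>A 2-graph presented as a small category whose morphisms (paths) form a set
  of elements of type 'p; objects (vertices) are identified with identity morphisms.
  cmp lam mu is the composite lam mu (defined when sr lam = rg mu, lam first/left).\<close>

record 'p kgraph =
  paths :: "'p set"
  rg :: "'p \<Rightarrow> 'p"
  sr :: "'p \<Rightarrow> 'p"
  cmp :: "'p \<Rightarrow> 'p \<Rightarrow> 'p"
  dg :: "'p \<Rightarrow> nat \<times> nat"

definition two_graph :: "('p, 'x) kgraph_scheme \<Rightarrow> bool" where
  "two_graph G \<longleftrightarrow>
     countable (paths G) \<and>
     (\<forall>l\<in>paths G. rg G l \<in> paths G \<and> sr G l \<in> paths G) \<and>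
     (\<forall>l\<in>paths G. rg G (rg G l) = rg G l \<and> sr G (rg G l) = rg G l \<and>
                   rg G (sr G l) = sr G l \<and> sr G (sr G l) = sr G l) \<and>
     (\<forall>l\<in>paths G. \<forall>m\<in>paths G. sr G l = rg G m \<longrightarrow>
        cmp G l m \<in> paths G \<and> rg G (cmp G l m) = rg G l \<and> sr G (cmp G l m) = sr G m) \<and>
     (\<forall>l\<in>paths G. cmp G (rg G l) l = l \<and> cmp G l (sr G l) = l) \<and>
     (\<forall>a\<in>paths G. \<forall>b\<in>paths G. \<forall>c\<in>paths G. sr G a = rg G b \<longrightarrow> sr G b = rg G c \<longrightarrow>
        cmp G (cmp G a b) c = cmp G a (cmp G b c)) \<and>
     (\<forall>l\<in>paths G. \<forall>m\<in>paths G. sr G l = rg G m \<longrightarrow> dg G (cmp G l m) = dg G l + dg G m) \<and>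
     (\<forall>l\<in>paths G. \<forall>m n. dg G l = m + n \<longrightarrow>
        (\<exists>!(a, b). a \<in> paths G \<and> b \<in> paths G \<and> sr G a = rg G b \<and>
                   dg G a = m \<and> dg G b = n \<and> cmp G a b = l))"

definition vertices :: "('p, 'x) kgraph_scheme \<Rightarrow> 'p set" where
  "vertices G = {v \<in> paths G. dg G v = 0}"

definition row_finite :: "('p, 'x) kgraph_scheme \<Rightarrow> bool" where
  "row_finite G \<longleftrightarrow> (\<forall>v\<in>vertices G. \<forall>n. finite {l \<in> paths G. rg G l = v \<and> dg G l = n})"

definition e1 :: "nat \<times> nat" where "e1 = (1, 0)"
definition e2 :: "nat \<times> nat" where "e2 = (0, 1)"

definition blue_path :: "('p, 'x) kgraph_scheme \<Rightarrow> 'p \<Rightarrow> bool" where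
  "blue_path G l \<longleftrightarrow> l \<in> paths G \<and> snd (dg G l) = 0"

definition red_path :: "('p, 'x) kgraph_scheme \<Rightarrow> 'p \<Rightarrow> bool" where
  "red_path G l \<longleftrightarrow> l \<in> paths G \<and> fst (dg G l) = 0"

definition blue_edge :: "('p, 'x) kgraph_scheme \<Rightarrow> 'p \<Rightarrow> bool" where
  "blue_edge G e \<longleftrightarrow> e \<in> paths G \<and> dg G e = e1"

definition red_edge :: "('p, 'x) kgraph_scheme \<Rightarrow> 'p \<Rightarrow> bool" where
  "red_edge G e \<longleftrightarrow> e \<in> paths G \<and> dg G e = e2"

text \<open>seg G l m n is l(m,n): the unique path with l = l' l(m,n) l'', d(l') = m,
  d(l(m,n)) = n - m (for m \<le> n \<le> d(l)).\<close>
definition seg :: "('p, 'x) kgraph_scheme \<Rightarrow> 'p \<Rightarrow> nat \<times> nat \<Rightarrow> nat \<times> nat \<Rightarrow> 'p" where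
  "seg G l m n = (THE p. \<exists>a b. a \<in> paths G \<and> p \<in> paths G \<and> b \<in> paths G \<and>
      sr G a = rg G p \<and> sr G p = rg G b \<and> dg G a = m \<and> dg G p = n - m \<and>
      cmp G (cmp G a p) b = l)"

definition is_cycle :: "('p, 'x) kgraph_scheme \<Rightarrow> 'p \<Rightarrow> bool" where
  "is_cycle G l \<longleftrightarrow> l \<in> paths G \<and> dg G l \<noteq> 0 \<and> rg G l = sr G l \<and>
     (\<forall>n. 0 < n \<and> n < dg G l \<longrightarrow> seg G l n n \<noteq> sr G l)"

definition isolated :: "('p, 'x) kgraph_scheme \<Rightarrow> 'p \<Rightarrow> bool" where
  "isolated G l \<longleftrightarrow>
     \<not> (\<exists>n \<le> dg G l. {m \<in> paths G. rg G m = rg G l \<and> dg G m = n} - {seg G l 0 n} \<noteq> {}) \<and>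
     \<not> (\<exists>n \<le> dg G l. {m \<in> paths G. sr G m = sr G l \<and> dg G m = n}
                         - {seg G l (dg G l - n) (dg G l)} \<noteq> {})"

definition rank2_bratteli ::
  "('p, 'x) kgraph_scheme \<Rightarrow> (nat \<Rightarrow> 'p set) \<Rightarrow> enat \<Rightarrow> bool" where
  "rank2_bratteli G V N \<longleftrightarrow>
     two_graph G \<and> row_finite G \<and>
     vertices G = (\<Union>n\<in>{n. enat n \<le> N}. V n) \<and>
     (\<forall>i j. enat i \<le> N \<longrightarrow> enat j \<le> N \<longrightarrow> i \<noteq> j \<longrightarrow> V i \<inter> V j = {}) \<and>
     (\<forall>n. enat n \<le> N \<longrightarrow> V n \<noteq> {} \<and> finite (V n)) \<and>
     (\<forall>e. blue_edge G e \<longrightarrow> (\<exists>n. rg G e \<in> V n \<and> sr G e \<in> V (Suc n))) \<and>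
     (\<forall>v\<in>vertices G. {e. blue_edge G e \<and> sr G e = v} = {} \<longrightarrow> v \<in> V 0) \<and>
     (\<forall>v\<in>vertices G. {e. blue_edge G e \<and> rg G e = v} = {} \<longrightarrow>
        (\<exists>n. enat n = N \<and> v \<in> V n)) \<and>
     (\<forall>v\<in>vertices G. \<exists>l. red_path G l \<and> is_cycle G l \<and> isolated G l \<and>
        (\<exists>n \<le> dg G l. seg G l n n = v)) \<and>
     (\<forall>e. red_edge G e \<longrightarrow> (\<exists>n. enat n \<le> N \<and> rg G e \<in> V n \<and> sr G e \<in> V n))"

definition Fmap :: "('p, 'x) kgraph_scheme \<Rightarrow> 'p \<Rightarrow> 'p" where
  "Fmap G a = (let f = (THE f. red_edge G f \<and> sr G f = rg G a) in
     THE b. blue_path G b \<and> (\<exists>f'. red_edge G f' \<and> sr G b = rg G f' \<and>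
                                  cmp G b f' = cmp G f a))"

definition ordF :: "('p, 'x) kgraph_scheme \<Rightarrow> 'p \<Rightarrow> nat" where
  "ordF G a = (LEAST k. 0 < k \<and> (Fmap G ^^ k) a = a)"

fun cmp_list :: "('p, 'x) kgraph_scheme \<Rightarrow> 'p list \<Rightarrow> 'p" where
  "cmp_list G [] = undefined"
| "cmp_list G [x] = x"
| "cmp_list G (x # y # xs) = cmp G x (cmp_list G (y # xs))"

end

theory Submission
  imports Defs
begin

(* Every vertex lies on an isolated red cycle, so each vertex receives and emits exactly one red
   edge; hence F is a well-defined, degree-preserving map on blue paths, and unique factorisation
   makes it injective on paths of a given degree and multiplicative: F(a b) = F(a) F(b).
   F preserves the level of the range, and a level carries only finitely many blue paths of a
   given degree, so every blue path is F-periodic.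
   (1) Pushing the red edges of the longer prefix one at a time across the blue edge shows that
   g = F^d(h), where d is the difference of the red degrees of mu and beta; periods are constant
   along orbits.
   (2) By unique factorisation, F^k fixes beta_1 ... beta_n iff it fixes every beta_i, so the
   period of beta is the least common multiple of the periods of the beta_i. *)

definition least_period :: "('a \<Rightarrow> 'a) \<Rightarrow> 'a \<Rightarrow> nat" where
  "least_period f x = (LEAST k. 0 < k \<and> (f ^^ k) x = x)"

lemma funpow_fixed_iff_least_period_dvd:
  assumes "0 < p" "(f ^^ p) x = x"
  shows "(f ^^ k) x = x \<longleftrightarrow> least_period f x dvd k"
proof -
  let ?n = "least_period f x"
  have n: "0 < ?n" "(f ^^ ?n) x = x"
    using LeastI[of "\<lambda>k. 0 < k \<and> (f ^^ k) x = x" p] assms unfolding least_period_def by auto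
  have least: "?n \<le> k" if "0 < k" "(f ^^ k) x = x" for k
    using that unfolding least_period_def by (auto intro: Least_le)
  have "(f ^^ k) x = (f ^^ (k mod ?n)) x"
    using funpow_mod_eq[OF n(2)] by simp
  moreover have "(f ^^ (k mod ?n)) x = x \<longleftrightarrow> k mod ?n = 0"
    using least[of "k mod ?n"] mod_less_divisor[OF n(1), of k] by fastforce
  ultimately show ?thesis
    by (simp add: dvd_eq_mod_eq_0)
qed

lemma funpow_commute: "(f ^^ m) ((f ^^ n) x) = (f ^^ n) ((f ^^ m) x)"
  by (metis add.commute comp_apply funpow_add)

lemma least_period_funpow:
  assumes "0 < p" "(f ^^ p) x = x"
  shows "least_period f ((f ^^ d) x) = least_period f x"
proof -
  let ?y = "(f ^^ d) x" and ?e = "p * d - d"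
  have "(f ^^ (p * d)) x = x"
    using funpow_mod_eq[OF assms(2), of "p * d"] by simp
  moreover have "d \<le> p * d"
    using assms(1) by (cases p) auto
  ultimately have return: "(f ^^ ?e) ?y = x"
    by (metis comp_apply funpow_add le_add_diff_inverse2)
  have "(f ^^ k) ?y = ?y \<longleftrightarrow> (f ^^ k) x = x" for k
  proof
    assume fixed: "(f ^^ k) ?y = ?y"
    have "(f ^^ k) x = (f ^^ k) ((f ^^ ?e) ?y)"
      by (simp only: return)
    also have "\<dots> = (f ^^ ?e) ((f ^^ k) ?y)"
      by (rule funpow_commute)
    finally show "(f ^^ k) x = x"
      by (simp only: fixed return)
  qed (simp add: funpow_commute)
  then show ?thesis
    unfolding least_period_def by simp
qed

lemma inj_on_funpow:
  assumes "f ` S \<subseteq> S" "inj_on f S"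
  shows "inj_on (f ^^ k) S"
proof (induction k)
  case (Suc k)
  have "inj_on (f ^^ k \<circ> f) S"
    using assms(2) inj_on_subset[OF Suc.IH assms(1)] by (rule comp_inj_on)
  then show ?case
    by (simp only: funpow_Suc_right)
qed simp

lemma periodic_if_inj_on_finite:
  assumes "finite S" "f ` S \<subseteq> S" "inj_on f S" "x \<in> S"
  obtains p where "0 < p" "(f ^^ p) x = x"
proof -
  have orbit: "(f ^^ k) x \<in> S" for k
    by (induction k) (use assms(2,4) in auto)
  have "\<not> inj_on (\<lambda>k. (f ^^ k) x) {..card S}"
  proof
    assume "inj_on (\<lambda>k. (f ^^ k) x) {..card S}"
    then have "card {..card S} \<le> card S"
      using card_inj_on_le[of _ "{..card S}" S] orbit assms(1) by blast
    then show False
      by simp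
  qed
  then obtain i j where ij: "i < j" "(f ^^ i) x = (f ^^ j) x"
    unfolding inj_on_def by (metis linorder_neqE_nat)
  then have "(f ^^ i) ((f ^^ (j - i)) x) = (f ^^ i) x"
    by (metis comp_apply funpow_add le_add_diff_inverse less_imp_le)
  then have "(f ^^ (j - i)) x = x"
    using inj_on_funpow[OF assms(2,3), of i] orbit assms(4) by (auto dest: inj_onD)
  then show thesis
    using that[of "j - i"] ij(1) by simp
qed

lemmas degree_simps = prod_eq_iff less_eq_prod_def e1_def e2_def

locale rank2_graph =
  fixes G :: "('p, 'x) kgraph_scheme"
  assumes two_graph: "two_graph G"
begin

lemma rg_in_paths: "l \<in> paths G \<Longrightarrow> rg G l \<in> paths G"
  and sr_in_paths: "l \<in> paths G \<Longrightarrow> sr G l \<in> paths G"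
  using two_graph unfolding two_graph_def by auto

lemma rg_rg [simp]: "l \<in> paths G \<Longrightarrow> rg G (rg G l) = rg G l"
  and sr_rg [simp]: "l \<in> paths G \<Longrightarrow> sr G (rg G l) = rg G l"
  and rg_sr [simp]: "l \<in> paths G \<Longrightarrow> rg G (sr G l) = sr G l"
  using two_graph unfolding two_graph_def by auto

lemma cmp_in_paths: "l \<in> paths G \<Longrightarrow> m \<in> paths G \<Longrightarrow> sr G l = rg G m \<Longrightarrow> cmp G l m \<in> paths G"
  and rg_cmp [simp]: "l \<in> paths G \<Longrightarrow> m \<in> paths G \<Longrightarrow> sr G l = rg G m \<Longrightarrow> rg G (cmp G l m) = rg G l"
  and sr_cmp [simp]: "l \<in> paths G \<Longrightarrow> m \<in> paths G \<Longrightarrow> sr G l = rg G m \<Longrightarrow> sr G (cmp G l m) = sr G m"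
  and dg_cmp [simp]:
    "l \<in> paths G \<Longrightarrow> m \<in> paths G \<Longrightarrow> sr G l = rg G m \<Longrightarrow> dg G (cmp G l m) = dg G l + dg G m"
  using two_graph unfolding two_graph_def by auto

lemma cmp_rg [simp]: "l \<in> paths G \<Longrightarrow> cmp G (rg G l) l = l"
  and cmp_sr [simp]: "l \<in> paths G \<Longrightarrow> cmp G l (sr G l) = l"
  using two_graph unfolding two_graph_def by auto

lemma cmp_assoc:
  "a \<in> paths G \<Longrightarrow> b \<in> paths G \<Longrightarrow> c \<in> paths G \<Longrightarrow> sr G a = rg G b \<Longrightarrow> sr G b = rg G c \<Longrightarrow>
   cmp G (cmp G a b) c = cmp G a (cmp G b c)"
  using two_graph unfolding two_graph_def by blast

lemma unique_factorisation:
  "l \<in> paths G \<Longrightarrow> dg G l = m + n \<Longrightarrow>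
   \<exists>!(a, b). a \<in> paths G \<and> b \<in> paths G \<and> sr G a = rg G b \<and> dg G a = m \<and> dg G b = n \<and> cmp G a b = l"
  using two_graph unfolding two_graph_def by blast

lemma factorisation:
  assumes "l \<in> paths G" "dg G l = m + n"
  obtains a b where "a \<in> paths G" "b \<in> paths G" "sr G a = rg G b" "dg G a = m" "dg G b = n"
    "cmp G a b = l"
  using unique_factorisation[OF assms] by blast

lemma factorisation_unique:
  assumes "a \<in> paths G" "b \<in> paths G" "a' \<in> paths G" "b' \<in> paths G"
    and "sr G a = rg G b" "sr G a' = rg G b'" "cmp G a b = cmp G a' b'" "dg G a = dg G a'"
  shows "a = a' \<and> b = b'"
proof -
  have "dg G b = dg G b'"
    using dg_cmp assms by (metis add_left_cancel)
  then show ?thesis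
    using unique_factorisation[OF cmp_in_paths[OF assms(1,2,5)] dg_cmp[OF assms(1,2,5)]] assms
    by (auto simp: Ex1_def)
qed

lemma factorisation_unique_right:
  assumes "a \<in> paths G" "b \<in> paths G" "a' \<in> paths G" "b' \<in> paths G"
    and "sr G a = rg G b" "sr G a' = rg G b'" "cmp G a b = cmp G a' b'" "dg G b = dg G b'"
  shows "a = a' \<and> b = b'"
proof -
  have "dg G a = dg G a'"
    using dg_cmp assms by (metis add_right_cancel)
  then show ?thesis
    using factorisation_unique assms by blast
qed

lemma middle_factor_unique:
  assumes "mu \<in> paths G" "g \<in> paths G" "nu \<in> paths G" "be \<in> paths G" "h \<in> paths G" "ga \<in> paths G"
    and "sr G mu = rg G g" "sr G g = rg G nu" "sr G be = rg G h" "sr G h = rg G ga"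
    and "cmp G (cmp G mu g) nu = cmp G (cmp G be h) ga" "dg G mu = dg G be" "dg G g = dg G h"
  shows "g = h"
proof -
  have "cmp G mu (cmp G g nu) = cmp G be (cmp G h ga)"
    using assms(11) cmp_assoc assms by metis
  then have "cmp G g nu = cmp G h ga"
    using factorisation_unique[OF assms(1) cmp_in_paths[OF assms(2,3,8)] assms(4)
        cmp_in_paths[OF assms(5,6,10)]] assms by simp
  then show ?thesis
    using factorisation_unique[OF assms(2,3,5,6,8,10)] assms(13) by blast
qed

lemma dg_rg [simp]: "l \<in> paths G \<Longrightarrow> dg G (rg G l) = 0"
  using dg_cmp[OF rg_in_paths, of l l] by simp

lemma dg_sr [simp]: "l \<in> paths G \<Longrightarrow> dg G (sr G l) = 0"
  using dg_rg rg_sr sr_in_paths by metis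

lemma degree_zero_vertex:
  assumes "p \<in> paths G" "dg G p = 0"
  shows "rg G p = p" "sr G p = p"
  using factorisation_unique[of "rg G p" p p "sr G p"] assms rg_in_paths sr_in_paths by auto

lemma rg_in_vertices: "l \<in> paths G \<Longrightarrow> rg G l \<in> vertices G"
  and sr_in_vertices: "l \<in> paths G \<Longrightarrow> sr G l \<in> vertices G"
  by (auto simp: vertices_def rg_in_paths sr_in_paths)

lemma seg_at_factorisation:
  assumes "a \<in> paths G" "b \<in> paths G" "sr G a = rg G b" "cmp G a b = l"
  shows "seg G l (dg G a) (dg G a) = sr G a"
  unfolding seg_def
proof (rule the_equality)
  show "\<exists>a' b'. a' \<in> paths G \<and> sr G a \<in> paths G \<and> b' \<in> paths G \<and> sr G a' = rg G (sr G a) \<and>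
      sr G (sr G a) = rg G b' \<and> dg G a' = dg G a \<and> dg G (sr G a) = dg G a - dg G a \<and>
      cmp G (cmp G a' (sr G a)) b' = l"
    by (rule exI[of _ a], rule exI[of _ b])
      (use assms sr_in_paths[OF assms(1)] cmp_sr[OF assms(1)] in auto)
next
  fix p
  assume "\<exists>a' b'. a' \<in> paths G \<and> p \<in> paths G \<and> b' \<in> paths G \<and> sr G a' = rg G p \<and>
      sr G p = rg G b' \<and> dg G a' = dg G a \<and> dg G p = dg G a - dg G a \<and> cmp G (cmp G a' p) b' = l"
  then obtain a' b' where h: "a' \<in> paths G" "p \<in> paths G" "b' \<in> paths G" "sr G a' = rg G p"
      "sr G p = rg G b'" "dg G a' = dg G a" "dg G p = 0" "cmp G (cmp G a' p) b' = l"
    by auto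
  have p: "rg G p = p" "sr G p = p"
    using degree_zero_vertex h(2,7) by auto
  then have "cmp G a' b' = cmp G a b"
    using h(1,4,8) assms(4) cmp_sr by metis
  then have "a' = a"
    using factorisation_unique[of a' b' a b] h assms p by auto
  then show "p = sr G a"
    using h(4) p by simp
qed

lemma isolated_range_unique:
  assumes "isolated G l" "m \<in> paths G" "m' \<in> paths G" "rg G m = rg G l" "rg G m' = rg G l"
    and "dg G m = dg G m'" "dg G m \<le> dg G l"
  shows "m = m'"
proof -
  have "\<forall>n\<le>dg G l. \<forall>m\<in>paths G. rg G m = rg G l \<and> dg G m = n \<longrightarrow> m = seg G l 0 n"
    using assms(1) unfolding isolated_def by blast
  then show ?thesis
    using assms(2-) by metis
qed

lemma isolated_source_unique:
  assumes "isolated G l" "m \<in> paths G" "m' \<in> paths G" "sr G m = sr G l" "sr G m' = sr G l"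
    and "dg G m = dg G m'" "dg G m \<le> dg G l"
  shows "m = m'"
proof -
  have "\<forall>n\<le>dg G l. \<forall>m\<in>paths G. sr G m = sr G l \<and> dg G m = n \<longrightarrow>
      m = seg G l (dg G l - n) (dg G l)"
    using assms(1) unfolding isolated_def by blast
  then show ?thesis
    using assms(2-) by metis
qed

lemma blue_edge_imp_blue_path: "blue_edge G b \<Longrightarrow> blue_path G b"
  by (simp add: blue_edge_def blue_path_def e1_def)

lemma blue_path_cmp:
  "blue_path G a \<Longrightarrow> blue_path G b \<Longrightarrow> sr G a = rg G b \<Longrightarrow> blue_path G (cmp G a b)"
  unfolding blue_path_def using cmp_in_paths by simp

end

locale rank2_bratteli_diagram =
  fixes G :: "('p, 'x) kgraph_scheme" and V :: "nat \<Rightarrow> 'p set" and N :: enat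
  assumes bratteli: "rank2_bratteli G V N"

sublocale rank2_bratteli_diagram \<subseteq> rank2_graph G
  using bratteli by unfold_locales (simp add: rank2_bratteli_def)

context rank2_bratteli_diagram
begin

lemma row_finite: "row_finite G"
  and vertices_levels: "vertices G = (\<Union>n\<in>{n. enat n \<le> N}. V n)"
  and levels_disjoint: "enat i \<le> N \<Longrightarrow> enat j \<le> N \<Longrightarrow> i \<noteq> j \<Longrightarrow> V i \<inter> V j = {}"
  and finite_level: "enat n \<le> N \<Longrightarrow> finite (V n)"
  and red_edge_level: "red_edge G e \<Longrightarrow> \<exists>n. enat n \<le> N \<and> rg G e \<in> V n \<and> sr G e \<in> V n"
  using bratteli unfolding rank2_bratteli_def by simp_all

lemma red_cycle_through_vertex:
  assumes "v \<in> vertices G"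
  obtains l a b where "red_path G l" "is_cycle G l" "isolated G l"
    "a \<in> paths G" "b \<in> paths G" "sr G a = rg G b" "cmp G a b = l" "sr G a = v"
proof -
  obtain l n where l: "red_path G l" "is_cycle G l" "isolated G l" "n \<le> dg G l" "seg G l n n = v"
    using bratteli assms unfolding rank2_bratteli_def by blast
  have "l \<in> paths G" "dg G l = n + (dg G l - n)"
    using l(1,4) by (auto simp: red_path_def degree_simps)
  then obtain a b where "a \<in> paths G" "b \<in> paths G" "sr G a = rg G b" "dg G a = n" "cmp G a b = l"
    by (rule factorisation)
  then show thesis
    using that l(1-3,5) seg_at_factorisation by metis
qed

text \<open>The last conclusion says that the factor next to v contains a red edge; when v is the base
  point of the cycle, this forces the factorisation l = l (sr l), resp. l = (rg l) l.\<close>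

lemma isolated_cycle_prefix_ending_at:
  assumes "v \<in> vertices G"
  obtains l a b m where "isolated G l" "a \<in> paths G" "b \<in> paths G" "sr G a = rg G b"
    "cmp G a b = l" "sr G a = v" "dg G a = m + e2"
proof -
  obtain l a b where l: "red_path G l" "is_cycle G l" "isolated G l"
    and ab: "a \<in> paths G" "b \<in> paths G" "sr G a = rg G b" "cmp G a b = l" "sr G a = v"
    by (rule red_cycle_through_vertex[OF assms])
  have lP: "l \<in> paths G" "fst (dg G l) = 0" "dg G l \<noteq> 0" "rg G l = sr G l"
    using l(1,2) unfolding red_path_def is_cycle_def by blast+
  have dl: "dg G l = dg G a + dg G b"
    using ab(1-4) dg_cmp by metis
  show thesis
  proof (cases "dg G a = 0")
    case True
    have "v = rg G a"
      using degree_zero_vertex[OF ab(1) True] ab(5) by simp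
    then have "v = sr G l"
      using rg_cmp[OF ab(1-3)] ab(4) lP(4) by simp
    moreover have "dg G l = (0, snd (dg G l) - 1) + e2"
      using lP(2,3) by (auto simp: degree_simps)
    ultimately show thesis
      using that[OF l(3) lP(1) sr_in_paths[OF lP(1)]] lP(1) by (metis rg_sr cmp_sr)
  next
    case False
    then have "dg G a = (0, snd (dg G a) - 1) + e2"
      using lP(2) dl by (auto simp: degree_simps)
    then show thesis
      using that[OF l(3) ab] by blast
  qed
qed

lemma isolated_cycle_suffix_starting_at:
  assumes "v \<in> vertices G"
  obtains l a b m where "isolated G l" "a \<in> paths G" "b \<in> paths G" "sr G a = rg G b"
    "cmp G a b = l" "rg G b = v" "dg G b = e2 + m"
proof -
  obtain l a b where l: "red_path G l" "is_cycle G l" "isolated G l"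
    and ab: "a \<in> paths G" "b \<in> paths G" "sr G a = rg G b" "cmp G a b = l" "sr G a = v"
    by (rule red_cycle_through_vertex[OF assms])
  have lP: "l \<in> paths G" "fst (dg G l) = 0" "dg G l \<noteq> 0" "rg G l = sr G l"
    using l(1,2) unfolding red_path_def is_cycle_def by blast+
  have dl: "dg G l = dg G a + dg G b"
    using ab(1-4) dg_cmp by metis
  show thesis
  proof (cases "dg G b = 0")
    case True
    have "v = sr G b"
      using degree_zero_vertex[OF ab(2) True] ab(3,5) by simp
    then have "v = rg G l"
      using sr_cmp[OF ab(1-3)] ab(4) lP(4) by simp
    moreover have "dg G l = e2 + (0, snd (dg G l) - 1)"
      using lP(2,3) by (auto simp: degree_simps)
    ultimately show thesis
      using that[OF l(3) rg_in_paths[OF lP(1)] lP(1)] lP(1) by (metis sr_rg cmp_rg)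
  next
    case False
    then have "dg G b = e2 + (0, snd (dg G b) - 1)"
      using lP(2) dl by (auto simp: degree_simps)
    then show thesis
      using that[OF l(3) ab(1-4)] ab(3,5) by metis
  qed
qed

lemma red_edge_source_unique:
  assumes e: "red_edge G e" "red_edge G e'" "sr G e = sr G e'"
  shows "e = e'"
proof -
  have eP: "e \<in> paths G" "e' \<in> paths G" "dg G e = e2" "dg G e' = e2"
    using e by (auto simp: red_edge_def)
  obtain l a b m where l: "isolated G l" "a \<in> paths G" "b \<in> paths G" "sr G a = rg G b"
    "cmp G a b = l" "sr G a = sr G e" "dg G a = m + e2"
    by (rule isolated_cycle_prefix_ending_at[OF sr_in_vertices[OF eP(1)]])
  have b: "sr G e = rg G b" "sr G e' = rg G b" "sr G b = sr G l"
    using l(2-6) e(3) by auto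
  have "dg G (cmp G e b) \<le> dg G l"
    using dg_cmp[OF l(2-4)] dg_cmp[OF eP(1) l(3) b(1)] l(5,7) eP(3) by (simp add: less_eq_prod_def)
  then have "cmp G e b = cmp G e' b"
    using isolated_source_unique[OF l(1) cmp_in_paths[OF eP(1) l(3) b(1)] cmp_in_paths[OF eP(2) l(3) b(2)]]
      eP b l(3) by simp
  then show ?thesis
    using factorisation_unique_right[OF eP(1) l(3) eP(2) l(3) b(1,2)] by simp
qed

lemma red_edge_range_unique:
  assumes e: "red_edge G e" "red_edge G e'" "rg G e = rg G e'"
  shows "e = e'"
proof -
  have eP: "e \<in> paths G" "e' \<in> paths G" "dg G e = e2" "dg G e' = e2"
    using e by (auto simp: red_edge_def)
  obtain l a b m where l: "isolated G l" "a \<in> paths G" "b \<in> paths G" "sr G a = rg G b"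
    "cmp G a b = l" "rg G b = rg G e" "dg G b = e2 + m"
    by (rule isolated_cycle_suffix_starting_at[OF rg_in_vertices[OF eP(1)]])
  have a: "sr G a = rg G e" "sr G a = rg G e'" "rg G a = rg G l"
    using l(2-6) e(3) by auto
  have "dg G (cmp G a e) \<le> dg G l"
    using dg_cmp[OF l(2-4)] dg_cmp[OF l(2) eP(1) a(1)] l(5,7) eP(3) by (simp add: less_eq_prod_def)
  then have "cmp G a e = cmp G a e'"
    using isolated_range_unique[OF l(1) cmp_in_paths[OF l(2) eP(1) a(1)] cmp_in_paths[OF l(2) eP(2) a(2)]]
      eP a l(2) by simp
  then show ?thesis
    using factorisation_unique[OF l(2) eP(1) l(2) eP(2) a(1,2)] by simp
qed

lemma red_edge_source_exists:
  assumes "v \<in> vertices G"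
  obtains e where "red_edge G e" "sr G e = v"
proof -
  obtain l a b m where a: "isolated G l" "a \<in> paths G" "b \<in> paths G" "sr G a = rg G b"
    "cmp G a b = l" "sr G a = v" "dg G a = m + e2"
    by (rule isolated_cycle_prefix_ending_at[OF assms])
  obtain a' e where "a' \<in> paths G" "e \<in> paths G" "sr G a' = rg G e" "dg G e = e2" "cmp G a' e = a"
    by (rule factorisation[OF a(2,7)])
  then show thesis
    using that[of e] a(6) by (auto simp: red_edge_def)
qed

lemma Fmap_eqI:
  assumes "red_edge G f" "sr G f = rg G a"
    and "blue_path G b" "red_edge G f'" "sr G b = rg G f'" "cmp G b f' = cmp G f a"
  shows "Fmap G a = b"
proof -
  have "(THE f. red_edge G f \<and> sr G f = rg G a) = f"
    by (rule the_equality) (use assms(1,2) red_edge_source_unique in auto)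
  moreover have "(THE b. blue_path G b \<and>
      (\<exists>f'. red_edge G f' \<and> sr G b = rg G f' \<and> cmp G b f' = cmp G f a)) = b"
  proof (rule the_equality)
    fix b'
    assume "blue_path G b' \<and> (\<exists>f'. red_edge G f' \<and> sr G b' = rg G f' \<and> cmp G b' f' = cmp G f a)"
    then show "b' = b"
      using factorisation_unique_right[of b' _ b f'] assms(3-6) by (auto simp: blue_path_def red_edge_def)
  qed (use assms(3-6) in blast)
  ultimately show ?thesis
    unfolding Fmap_def Let_def by simp
qed

lemma Fmap_square:
  assumes "blue_path G a"
  obtains f f' where "red_edge G f" "sr G f = rg G a" "red_edge G f'" "sr G (Fmap G a) = rg G f'"
    "cmp G (Fmap G a) f' = cmp G f a" "rg G (Fmap G a) = rg G f" "sr G f' = sr G a"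
    "blue_path G (Fmap G a)" "dg G (Fmap G a) = dg G a"
proof -
  have aP: "a \<in> paths G"
    using assms by (simp add: blue_path_def)
  obtain f where f: "red_edge G f" "sr G f = rg G a"
    using red_edge_source_exists[OF rg_in_vertices[OF aP]] by blast
  have fP: "f \<in> paths G" "dg G f = e2"
    using f by (auto simp: red_edge_def)
  have "dg G (cmp G f a) = dg G a + e2"
    using aP fP f(2) by (simp add: add.commute)
  then obtain b f' where bf: "b \<in> paths G" "f' \<in> paths G" "sr G b = rg G f'" "dg G b = dg G a"
      "dg G f' = e2" "cmp G b f' = cmp G f a"
    using factorisation[OF cmp_in_paths[OF fP(1) aP f(2)]] by blast
  have "blue_path G b" "red_edge G f'"
    using bf assms by (simp_all add: blue_path_def red_edge_def)
  moreover have "Fmap G a = b"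
    using Fmap_eqI f calculation bf by blast
  moreover have "rg G b = rg G f" "sr G f' = sr G a"
    using rg_cmp[OF bf(1-3)] sr_cmp[OF bf(1-3)] rg_cmp[OF fP(1) aP f(2)] sr_cmp[OF fP(1) aP f(2)] bf(6)
    by simp_all
  ultimately show thesis
    using that f bf by simp
qed

lemma blue_path_Fmap: "blue_path G a \<Longrightarrow> blue_path G (Fmap G a)"
  and dg_Fmap: "blue_path G a \<Longrightarrow> dg G (Fmap G a) = dg G a"
  by (metis Fmap_square)+

lemma Fmap_inj:
  assumes a: "blue_path G a" and b: "blue_path G b" and "dg G a = dg G b" "Fmap G a = Fmap G b"
  shows "a = b"
proof -
  obtain f f' where fa: "red_edge G f" "sr G f = rg G a" "red_edge G f'"
      "sr G (Fmap G a) = rg G f'" "cmp G (Fmap G a) f' = cmp G f a"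
    using Fmap_square[OF a] by blast
  obtain g g' where gb: "red_edge G g" "sr G g = rg G b" "red_edge G g'"
      "sr G (Fmap G b) = rg G g'" "cmp G (Fmap G b) g' = cmp G g b"
    using Fmap_square[OF b] by blast
  have "f' = g'"
    using red_edge_range_unique[OF fa(3) gb(3)] fa(4) gb(4) assms(4) by simp
  then have "cmp G f a = cmp G g b"
    using fa(5) gb(5) assms(4) by simp
  then show ?thesis
    using factorisation_unique_right[of f a g b] fa gb a b assms(3)
    by (auto simp: blue_path_def red_edge_def)
qed

lemma Fmap_cmp:
  assumes a: "blue_path G a" and b: "blue_path G b" and ab: "sr G a = rg G b"
  shows "Fmap G (cmp G a b) = cmp G (Fmap G a) (Fmap G b)" "sr G (Fmap G a) = rg G (Fmap G b)"
proof -
  obtain f f1 where fa: "red_edge G f" "sr G f = rg G a" "red_edge G f1"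
      "sr G (Fmap G a) = rg G f1" "cmp G (Fmap G a) f1 = cmp G f a" "sr G f1 = sr G a"
      "blue_path G (Fmap G a)"
    using Fmap_square[OF a] by blast
  obtain g f2 where gb: "red_edge G g" "sr G g = rg G b" "red_edge G f2"
      "sr G (Fmap G b) = rg G f2" "cmp G (Fmap G b) f2 = cmp G g b" "rg G (Fmap G b) = rg G g"
      "blue_path G (Fmap G b)"
    using Fmap_square[OF b] by blast
  have P: "a \<in> paths G" "b \<in> paths G" "f \<in> paths G" "f1 \<in> paths G" "f2 \<in> paths G"
    "Fmap G a \<in> paths G" "Fmap G b \<in> paths G"
    using fa gb a b by (auto simp: blue_path_def red_edge_def)
  have f1: "sr G f1 = rg G b"
    using fa(6) ab by simp
  then have g: "g = f1"
    using red_edge_source_unique[OF gb(1) fa(3)] gb(2) by simp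
  show c: "sr G (Fmap G a) = rg G (Fmap G b)"
    using fa(4) gb(6) g by simp
  have "cmp G (cmp G (Fmap G a) (Fmap G b)) f2 = cmp G (Fmap G a) (cmp G f1 b)"
    using cmp_assoc[OF P(6,7,5) c gb(4)] gb(5) g by simp
  also have "\<dots> = cmp G f (cmp G a b)"
    using cmp_assoc[OF P(6,4,2) fa(4) f1] fa(5) cmp_assoc[OF P(3,1,2) fa(2) ab] by simp
  finally have square: "cmp G (cmp G (Fmap G a) (Fmap G b)) f2 = cmp G f (cmp G a b)" .
  have "sr G f = rg G (cmp G a b)"
    using fa(2) rg_cmp[OF P(1,2) ab] by simp
  moreover have "sr G (cmp G (Fmap G a) (Fmap G b)) = rg G f2"
    using sr_cmp[OF P(6,7) c] gb(4) by simp
  ultimately show "Fmap G (cmp G a b) = cmp G (Fmap G a) (Fmap G b)"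
    using Fmap_eqI[OF fa(1) _ blue_path_cmp[OF fa(7) gb(7) c] gb(3) _ square] by blast
qed

lemma blue_path_funpow_Fmap: "blue_path G a \<Longrightarrow> blue_path G ((Fmap G ^^ k) a)"
  and dg_funpow_Fmap: "blue_path G a \<Longrightarrow> dg G ((Fmap G ^^ k) a) = dg G a"
  by (induction k) (auto simp: blue_path_Fmap dg_Fmap)

lemma funpow_Fmap_cmp:
  assumes "blue_path G a" "blue_path G b" "sr G a = rg G b"
  shows "(Fmap G ^^ k) (cmp G a b) = cmp G ((Fmap G ^^ k) a) ((Fmap G ^^ k) b) \<and>
    sr G ((Fmap G ^^ k) a) = rg G ((Fmap G ^^ k) b)"
proof (induction k)
  case (Suc k)
  then show ?case
    using Fmap_cmp[OF blue_path_funpow_Fmap[OF assms(1)] blue_path_funpow_Fmap[OF assms(2)]] by simp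
qed (simp add: assms(3))

lemma funpow_Fmap_cmp_fixed_iff:
  assumes a: "blue_path G a" and b: "blue_path G b" and ab: "sr G a = rg G b"
  shows "(Fmap G ^^ k) (cmp G a b) = cmp G a b \<longleftrightarrow> (Fmap G ^^ k) a = a \<and> (Fmap G ^^ k) b = b"
proof
  assume "(Fmap G ^^ k) (cmp G a b) = cmp G a b"
  then have "cmp G ((Fmap G ^^ k) a) ((Fmap G ^^ k) b) = cmp G a b"
    using funpow_Fmap_cmp[OF assms] by simp
  moreover have "(Fmap G ^^ k) a \<in> paths G" "(Fmap G ^^ k) b \<in> paths G" "a \<in> paths G" "b \<in> paths G"
    using a b blue_path_funpow_Fmap by (auto simp: blue_path_def)
  ultimately show "(Fmap G ^^ k) a = a \<and> (Fmap G ^^ k) b = b"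
    using factorisation_unique[of "(Fmap G ^^ k) a" "(Fmap G ^^ k) b" a b] funpow_Fmap_cmp[OF assms]
      dg_funpow_Fmap[OF a] ab by simp
qed (use funpow_Fmap_cmp[OF assms] in simp)

lemma rg_Fmap_level:
  assumes a: "blue_path G a" and n: "enat n \<le> N" "rg G a \<in> V n"
  shows "rg G (Fmap G a) \<in> V n"
proof -
  obtain f where f: "red_edge G f" "sr G f = rg G a" "rg G (Fmap G a) = rg G f"
    using Fmap_square[OF a] by blast
  obtain n' where n': "enat n' \<le> N" "rg G f \<in> V n'" "sr G f \<in> V n'"
    using red_edge_level[OF f(1)] by blast
  have "rg G a \<in> V n' \<inter> V n"
    using n'(3) f(2) n(2) by simp
  then have "n' = n"
    using levels_disjoint[OF n'(1) n(1)] by auto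
  then show ?thesis
    using f(3) n'(2) by simp
qed

lemma finite_blue_paths_from_level:
  assumes "enat n \<le> N"
  shows "finite {x. blue_path G x \<and> dg G x = d \<and> rg G x \<in> V n}"
proof -
  have "finite (\<Union>v\<in>V n. {l \<in> paths G. rg G l = v \<and> dg G l = d})"
  proof (rule finite_UN_I[OF finite_level[OF assms]])
    fix v
    assume "v \<in> V n"
    then have "v \<in> vertices G"
      using vertices_levels assms by blast
    then show "finite {l \<in> paths G. rg G l = v \<and> dg G l = d}"
      using row_finite unfolding row_finite_def by blast
  qed
  then show ?thesis
    by (rule finite_subset[rotated]) (auto simp: blue_path_def)
qed

lemma blue_path_periodic:
  assumes a: "blue_path G a"
  obtains p where "0 < p" "(Fmap G ^^ p) a = a"
proof -
  have "rg G a \<in> (\<Union>n\<in>{n. enat n \<le> N}. V n)"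
    using rg_in_vertices a vertices_levels by (simp add: blue_path_def)
  then obtain n where n: "enat n \<le> N" "rg G a \<in> V n"
    by blast
  define S where "S = {x. blue_path G x \<and> dg G x = dg G a \<and> rg G x \<in> V n}"
  have closed: "Fmap G ` S \<subseteq> S"
  proof (rule image_subsetI)
    fix x
    assume "x \<in> S"
    then show "Fmap G x \<in> S"
      using rg_Fmap_level[OF _ n(1)] blue_path_Fmap dg_Fmap unfolding S_def by simp
  qed
  have inj: "inj_on (Fmap G) S"
  proof (rule inj_onI)
    fix x y
    assume "x \<in> S" "y \<in> S" "Fmap G x = Fmap G y"
    then show "x = y"
      using Fmap_inj[of x y] unfolding S_def by simp
  qed
  have "finite S"
    unfolding S_def by (rule finite_blue_paths_from_level[OF n(1)])
  moreover have "a \<in> S"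
    using a n(2) unfolding S_def by simp
  ultimately show thesis
    using periodic_if_inj_on_finite[OF _ closed inj] that by blast
qed

lemma ordF_eq_least_period: "ordF G a = least_period (Fmap G) a"
  unfolding ordF_def least_period_def ..

lemma ordF_dvd_iff:
  assumes "blue_path G a"
  shows "ordF G a dvd k \<longleftrightarrow> (Fmap G ^^ k) a = a"
proof -
  obtain p where p: "0 < p" "(Fmap G ^^ p) a = a"
    by (rule blue_path_periodic[OF assms])
  show ?thesis
    using funpow_fixed_iff_least_period_dvd[OF p] by (simp add: ordF_eq_least_period)
qed

lemma ordF_funpow_Fmap:
  assumes "blue_path G a"
  shows "ordF G ((Fmap G ^^ d) a) = ordF G a"
proof -
  obtain p where p: "0 < p" "(Fmap G ^^ p) a = a"
    by (rule blue_path_periodic[OF assms])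
  show ?thesis
    using least_period_funpow[OF p] by (simp add: ordF_eq_least_period)
qed

lemma push_red_edge_across_blue:
  assumes h: "blue_path G h" and paths: "be \<in> paths G" "ga \<in> paths G"
    and "sr G be = rg G h" "sr G h = rg G ga" "dg G be = m + e2"
  obtains be' ga' where "be' \<in> paths G" "ga' \<in> paths G" "sr G be' = rg G (Fmap G h)"
    "sr G (Fmap G h) = rg G ga'" "dg G be' = m"
    "cmp G (cmp G be h) ga = cmp G (cmp G be' (Fmap G h)) ga'"
proof -
  obtain be' f where bf: "be' \<in> paths G" "f \<in> paths G" "sr G be' = rg G f" "dg G be' = m"
      "dg G f = e2" "cmp G be' f = be"
    using factorisation[OF paths(1) assms(6)] by blast
  have hP: "h \<in> paths G" "sr G f = rg G h"
    using h bf assms(4) by (auto simp: blue_path_def)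
  obtain f0 f' where F: "red_edge G f0" "sr G f0 = rg G h" "red_edge G f'"
      "sr G (Fmap G h) = rg G f'" "cmp G (Fmap G h) f' = cmp G f0 h" "rg G (Fmap G h) = rg G f0"
      "sr G f' = sr G h" "blue_path G (Fmap G h)"
    using Fmap_square[OF h] by blast
  have "f0 = f"
    using red_edge_source_unique[OF F(1)] bf(2,5) F(2) hP(2) by (simp add: red_edge_def)
  then have F5: "cmp G (Fmap G h) f' = cmp G f h" and rF: "sr G be' = rg G (Fmap G h)"
    using F(5,6) bf(3) by simp_all
  have FP: "Fmap G h \<in> paths G" "f' \<in> paths G" "sr G f' = rg G ga"
    using F(3,7,8) assms(5) by (auto simp: blue_path_def red_edge_def)
  have "cmp G (cmp G be h) ga = cmp G (cmp G be' (cmp G f h)) ga"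
    using bf cmp_assoc hP by metis
  also have "\<dots> = cmp G (cmp G be' (Fmap G h)) (cmp G f' ga)"
    using F5 cmp_assoc bf(1) FP paths(2) rF F(4) cmp_in_paths sr_cmp by metis
  finally show thesis
    using that[OF bf(1) cmp_in_paths[OF FP(2) paths(2) FP(3)] rF] rg_cmp[OF FP(2) paths(2) FP(3)] F(4)
      bf(4) by simp
qed

lemma blue_edge_eq_funpow_Fmap:
  assumes "mu \<in> paths G" "blue_edge G g" "nu \<in> paths G" "sr G mu = rg G g" "sr G g = rg G nu"
    and "be \<in> paths G" "blue_edge G h" "ga \<in> paths G" "sr G be = rg G h" "sr G h = rg G ga"
    and "cmp G (cmp G mu g) nu = cmp G (cmp G be h) ga" "dg G be = dg G mu + (0, d)"
  shows "g = (Fmap G ^^ d) h"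
  using assms(6-)
proof (induction d arbitrary: be h ga)
  case 0
  then show ?case
    using middle_factor_unique[of mu g nu be h ga] assms(1-5) by (simp add: blue_edge_def zero_prod_def)
next
  case (Suc d)
  have "dg G be = (dg G mu + (0, d)) + e2"
    using Suc.prems(7) by (simp add: degree_simps)
  then obtain be' ga' where "be' \<in> paths G" "ga' \<in> paths G" "sr G be' = rg G (Fmap G h)"
      "sr G (Fmap G h) = rg G ga'" "dg G be' = dg G mu + (0, d)"
      "cmp G (cmp G be h) ga = cmp G (cmp G be' (Fmap G h)) ga'"
    using push_red_edge_across_blue[OF blue_edge_imp_blue_path] Suc.prems by metis
  moreover have "blue_edge G (Fmap G h)"
    using Suc.prems(2) blue_path_Fmap dg_Fmap blue_edge_imp_blue_path
    by (simp add: blue_edge_def blue_path_def)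
  ultimately have "g = (Fmap G ^^ d) (Fmap G h)"
    using Suc.IH Suc.prems(6) by metis
  then show ?case
    by (simp add: funpow_Suc_right del: funpow.simps)
qed

lemma ordF_eq_if_same_blue_position:
  assumes "mu \<in> paths G" "blue_edge G g" "nu \<in> paths G" "sr G mu = rg G g" "sr G g = rg G nu"
    and "be \<in> paths G" "blue_edge G h" "ga \<in> paths G" "sr G be = rg G h" "sr G h = rg G ga"
    and "cmp G (cmp G mu g) nu = cmp G (cmp G be h) ga" "fst (dg G mu) = fst (dg G be)"
  shows "ordF G g = ordF G h"
proof (cases "snd (dg G mu) \<le> snd (dg G be)")
  case True
  then have "dg G be = dg G mu + (0, snd (dg G be) - snd (dg G mu))"
    using assms(12) by (simp add: prod_eq_iff)
  then show ?thesis
    using blue_edge_eq_funpow_Fmap[OF assms(1-11)] ordF_funpow_Fmap blue_edge_imp_blue_path assms(7)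
    by metis
next
  case False
  then have "dg G mu = dg G be + (0, snd (dg G mu) - snd (dg G be))"
    using assms(12) by (simp add: prod_eq_iff)
  then show ?thesis
    using blue_edge_eq_funpow_Fmap[OF assms(6-10,1-5) assms(11)[symmetric]] ordF_funpow_Fmap
      blue_edge_imp_blue_path assms(2) by metis
qed

lemma cmp_list_blue_edges:
  assumes "bs \<noteq> []" "\<forall>b\<in>set bs. blue_edge G b"
    and "\<forall>i. Suc i < length bs \<longrightarrow> sr G (bs ! i) = rg G (bs ! Suc i)"
  shows "blue_path G (cmp_list G bs) \<and> rg G (cmp_list G bs) = rg G (hd bs) \<and>
    ((Fmap G ^^ k) (cmp_list G bs) = cmp_list G bs \<longleftrightarrow> (\<forall>b\<in>set bs. (Fmap G ^^ k) b = b))"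
  using assms
proof (induction bs rule: induct_list012)
  case (2 x)
  then show ?case
    by (simp add: blue_edge_imp_blue_path)
next
  case (3 x y zs)
  have "\<forall>i. Suc i < length (y # zs) \<longrightarrow> sr G ((y # zs) ! i) = rg G ((y # zs) ! Suc i)"
    using "3.prems"(3) by fastforce
  then have IH: "blue_path G (cmp_list G (y # zs))" "rg G (cmp_list G (y # zs)) = rg G y"
    "(Fmap G ^^ k) (cmp_list G (y # zs)) = cmp_list G (y # zs) \<longleftrightarrow>
      (\<forall>b\<in>set (y # zs). (Fmap G ^^ k) b = b)"
    using "3.IH"(2) "3.prems"(2) by auto
  have x: "blue_path G x" "sr G x = rg G (cmp_list G (y # zs))"
    using "3.prems"(2) "3.prems"(3)[rule_format, of 0] IH(2) by (auto simp: blue_edge_imp_blue_path)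
  then show ?case
    using blue_path_cmp[OF x(1) IH(1) x(2)] funpow_Fmap_cmp_fixed_iff[OF x(1) IH(1) x(2)] IH
      rg_cmp[of x "cmp_list G (y # zs)"] by (simp add: blue_path_def)
qed simp

lemma ordF_cmp_list:
  assumes "bs \<noteq> []" "\<forall>b\<in>set bs. blue_edge G b"
    and "\<forall>i. Suc i < length bs \<longrightarrow> sr G (bs ! i) = rg G (bs ! Suc i)"
  shows "ordF G (cmp_list G bs) = Lcm (set (map (ordF G) bs))"
proof -
  have dvd_iff: "ordF G (cmp_list G bs) dvd k \<longleftrightarrow> (\<forall>b\<in>set bs. ordF G b dvd k)" for k
    using cmp_list_blue_edges[OF assms] ordF_dvd_iff blue_edge_imp_blue_path assms(2) by simp
  show ?thesis
    using dvd_iff[of "ordF G (cmp_list G bs)"] dvd_iff by (intro sym[OF Lcm_eqI]) auto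
qed

end

theorem lemma5p2:
  fixes G :: "('p, 'x) kgraph_scheme" and V :: "nat \<Rightarrow> 'p set" and N :: enat
  assumes "rank2_bratteli G V N"
  shows "(\<forall>al mu g nu be h ga.
            al \<in> paths G \<and> mu \<in> paths G \<and> nu \<in> paths G \<and> be \<in> paths G \<and> ga \<in> paths G \<and>
            blue_edge G g \<and> blue_edge G h \<and>
            sr G mu = rg G g \<and> sr G g = rg G nu \<and> sr G be = rg G h \<and> sr G h = rg G ga \<and>
            al = cmp G (cmp G mu g) nu \<and> al = cmp G (cmp G be h) ga \<and>
            fst (dg G mu) = fst (dg G be)
          \<longrightarrow> ordF G g = ordF G h)
       \<and> (\<forall>bs. bs \<noteq> [] \<and> (\<forall>b\<in>set bs. blue_edge G b) \<and>
            (\<forall>i. Suc i < length bs \<longrightarrow> sr G (bs ! i) = rg G (bs ! Suc i))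
          \<longrightarrow> ordF G (cmp_list G bs) = Lcm (set (map (ordF G) bs)))"
proof -
  interpret rank2_bratteli_diagram G V N
    using assms by unfold_locales
  show ?thesis
    using ordF_eq_if_same_blue_position ordF_cmp_list by blast
qed

end
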